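(* Let $\Sigma$ and $\Delta$ be alphabets and $\varphi:\Delta\to 2^{\Sigma^*}$ a regular language substitution. (1) Let $\mathcal{R}_1=(K_1,\varphi)$ and $\mathcal{R}_2=(K_2,\varphi)$ be rational sets of regular languages with regular $K_1,K_2\subseteq\Delta^+$. Then $\mathcal{R}_1\cdot\mathcal{R}_2=\{L_1\cdot L_2\mid L_1\in\mathcal{R}_1,\ L_2\in\mathcal{R}_2\}$ is a rational set of regular languages of the form $(K',\varphi)$ for some regular $K'\subseteq\Delta^+$ (same substitution $\varphi$). If $\mathcal{R}_1$ and $\mathcal{R}_2$ are finite, then $\mathcal{R}_1\cdot\mathcal{R}_2$ is finite. (2) For every rational set of regular languages $\mathcal{R}$, the set $\mathcal{R}^\star=\bigcup_{i\in\mathbb{N}}\mathcal{R}^i$ is a rational set of regular languages. Moreover, $\mathcal{R}^\star$ is in general infinite even if $\mathcal{R}$ is finite: there exists a finite rational set of regular languages $\mathcal{R}$ for which $\mathcal{R}^\star$ is infinite.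
   Context: An alphabet is a nonempty finite set. A regular language substitution is a map $\varphi:\Delta\to 2^{\Sigma^*}$ such that each $\varphi(\delta)$ is a regular language over $\Sigma$. It is extended to words by $\varphi(\delta\cdot w)=\varphi(\delta)\cdot\varphi(w)$ and to languages $L$ by $\varphi(L)=\bigcup_{w\in L}\varphi(w)$. A set $\mathcal{R}$ of regular languages over $\Sigma$ is a rational set of regular languages (RSRL), written $\mathcal{R}=(K,\varphi)$, if there exist an alphabet $\Delta$, a regular language $K\subseteq\Delta^+$ and a regular language substitution $\varphi:\Delta\to2^{\Sigma^*}$ with $\mathcal{R}=\{\varphi(w)\mid w\in K\}$. Powers of sets of languages are defined by $\mathcal{R}^0=\{\{\varepsilon\}\}$ and $\mathcal{R}^{i+1}=\mathcal{R}^i\cdot\mathcal{R}$, with the product $\mathcal{R}_1\cdot\mathcal{R}_2=\{L_1L_2\mid L_1\in\mathcal{R}_1,L_2\in\mathcal{R}_2\}$. *)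

theory Defs
  imports Main
begin

definition conc :: "'a list set \<Rightarrow> 'a list set \<Rightarrow> 'a list set" where
  "conc A B = {u @ v | u v. u \<in> A \<and> v \<in> B}"

inductive_set kstar :: "'a list set \<Rightarrow> 'a list set" for A :: "'a list set" where
  kstar_Nil: "[] \<in> kstar A"
| kstar_app: "u \<in> A \<Longrightarrow> v \<in> kstar A \<Longrightarrow> u @ v \<in> kstar A"

inductive regular_on :: "'a set \<Rightarrow> 'a list set \<Rightarrow> bool" for S :: "'a set" where
  reg_empty: "regular_on S {}"
| reg_eps: "regular_on S {[]}"
| reg_letter: "a \<in> S \<Longrightarrow> regular_on S {[a]}"
| reg_union: "regular_on S A \<Longrightarrow> regular_on S B \<Longrightarrow> regular_on S (A \<union> B)"
| reg_conc: "regular_on S A \<Longrightarrow> regular_on S B \<Longrightarrow> regular_on S (conc A B)"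
| reg_star: "regular_on S A \<Longrightarrow> regular_on S (kstar A)"

fun subst_word :: "('d \<Rightarrow> 'a list set) \<Rightarrow> 'd list \<Rightarrow> 'a list set" where
  "subst_word \<phi> [] = {[]}"
| "subst_word \<phi> (d # w) = conc (\<phi> d) (subst_word \<phi> w)"

definition subst_lang :: "('d \<Rightarrow> 'a list set) \<Rightarrow> 'd list set \<Rightarrow> 'a list set" where
  "subst_lang \<phi> L = (\<Union>w\<in>L. subst_word \<phi> w)"

definition rsrl_of :: "'d list set \<Rightarrow> ('d \<Rightarrow> 'a list set) \<Rightarrow> 'a list set set" where
  "rsrl_of K \<phi> = {subst_word \<phi> w | w. w \<in> K}"

definition reg_subst_on :: "'d set \<Rightarrow> ('d \<Rightarrow> 'a list set) \<Rightarrow> bool" where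
  "reg_subst_on D \<phi> \<longleftrightarrow> (\<forall>d\<in>D. regular_on UNIV (\<phi> d))"

definition ctrl_lang :: "'d set \<Rightarrow> 'd list set \<Rightarrow> bool" where
  "ctrl_lang D K \<longleftrightarrow> K \<subseteq> lists D - {[]} \<and> regular_on D K"

text \<open>Rational set of regular languages: some (finite, nonempty) alphabet \<open>\<Delta>\<close>,
  encoded as a finite set of natural numbers, a regular \<open>K \<subseteq> \<Delta>\<^sup>+\<close>
  and a regular language substitution \<open>\<phi>\<close>.\<close>
definition is_rsrl :: "'a list set set \<Rightarrow> bool" where
  "is_rsrl R \<longleftrightarrow> (\<exists>(D::nat set) K \<phi>. finite D \<and> D \<noteq> {} \<and> ctrl_lang D K \<and>
       reg_subst_on D \<phi> \<and> R = rsrl_of K \<phi>)"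

definition lang_set_prod :: "'a list set set \<Rightarrow> 'a list set set \<Rightarrow> 'a list set set" where
  "lang_set_prod R1 R2 = {conc L1 L2 | L1 L2. L1 \<in> R1 \<and> L2 \<in> R2}"

primrec lang_set_pow :: "'a list set set \<Rightarrow> nat \<Rightarrow> 'a list set set" where
  "lang_set_pow R 0 = {{[]}}"
| "lang_set_pow R (Suc i) = lang_set_prod (lang_set_pow R i) R"

definition lang_set_star :: "'a list set set \<Rightarrow> 'a list set set" where
  "lang_set_star R = (\<Union>i. lang_set_pow R i)"

end

theory Submission
  imports Defs
begin

text \<open>The extension of \<open>\<phi>\<close> to words is a monoid morphism, \<open>\<phi>(uv) = \<phi>(u)\<phi>(v)\<close>, so
  \<open>(K\<^sub>1, \<phi>) \<cdot> (K\<^sub>2, \<phi>) = (K\<^sub>1K\<^sub>2, \<phi>)\<close> and \<open>(K, \<phi>)\<^sup>i = (K\<^sup>i, \<phi>)\<close>, hence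
  \<open>(K, \<phi>)\<^sup>\<star> = (K\<^sup>*, \<phi>)\<close>. Since a control language may not contain the empty word,
  \<open>K\<^sup>* = {\<epsilon>} \<union> KK\<^sup>*\<close> is realised as \<open>{e} \<union> KK\<^sup>*\<close> for a fresh letter \<open>e\<close> with
  \<open>\<phi>(e) = {\<epsilon>}\<close>. Finally \<open>{{a}}\<^sup>\<star> = {{a\<^sup>i} | i \<in> \<nat>}\<close> is infinite.\<close>

lemma conc_assoc: "conc (conc A B) C = conc A (conc B C)"
  unfolding conc_def by (auto, metis append.assoc, metis append.assoc)

lemma conc_Nil_left [simp]: "conc {[]} A = A"
  unfolding conc_def by auto

lemma conc_Nil_right [simp]: "conc A {[]} = A"
  unfolding conc_def by auto

lemma finite_lang_set_prod:
  assumes "finite R1" "finite R2"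
  shows "finite (lang_set_prod R1 R2)"
proof -
  have "lang_set_prod R1 R2 = (\<lambda>(L1, L2). conc L1 L2) ` (R1 \<times> R2)"
    unfolding lang_set_prod_def by auto
  then show ?thesis using assms by simp
qed

primrec lang_pow :: "'a list set \<Rightarrow> nat \<Rightarrow> 'a list set" where
  "lang_pow K 0 = {[]}"
| "lang_pow K (Suc i) = conc (lang_pow K i) K"

lemma lang_pow_Suc_left: "lang_pow K (Suc i) = conc K (lang_pow K i)"
  by (induction i) (simp_all add: conc_assoc)

lemma kstar_snoc: "v \<in> kstar K \<Longrightarrow> u \<in> K \<Longrightarrow> v @ u \<in> kstar K"
  by (induction rule: kstar.induct) (auto intro: kstar.intros kstar_app[of u K "[]", simplified])

lemma lang_pow_subset_kstar: "lang_pow K i \<subseteq> kstar K"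
  by (induction i) (auto simp: conc_def intro: kstar.intros kstar_snoc)

lemma kstar_eq_UN_lang_pow: "kstar K = (\<Union>i. lang_pow K i)"
proof
  show "kstar K \<subseteq> (\<Union>i. lang_pow K i)"
  proof
    fix w assume "w \<in> kstar K"
    then show "w \<in> (\<Union>i. lang_pow K i)"
    proof (induction rule: kstar.induct)
      case kstar_Nil
      have "[] \<in> lang_pow K 0" by simp
      then show ?case by blast
    next
      case (kstar_app u v)
      then obtain i where "v \<in> lang_pow K i" by blast
      with \<open>u \<in> K\<close> have "u @ v \<in> lang_pow K (Suc i)"
        unfolding lang_pow_Suc_left conc_def by blast
      then show ?case by blast
    qed
  qed
  show "(\<Union>i. lang_pow K i) \<subseteq> kstar K"
    using lang_pow_subset_kstar by blast
qed

lemma kstar_unfold: "kstar K = insert [] (conc K (kstar K))"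
proof
  show "kstar K \<subseteq> insert [] (conc K (kstar K))"
    by (auto simp: conc_def elim: kstar.cases)
  show "insert [] (conc K (kstar K)) \<subseteq> kstar K"
    by (auto simp: conc_def intro: kstar.intros)
qed

lemma kstar_in_lists: "w \<in> kstar K \<Longrightarrow> K \<subseteq> lists D \<Longrightarrow> w \<in> lists D"
  by (induction rule: kstar.induct) auto

lemma regular_on_mono: "regular_on D K \<Longrightarrow> D \<subseteq> D' \<Longrightarrow> regular_on D' K"
  by (induction rule: regular_on.induct) (auto intro: regular_on.intros)

lemma conc_subset_nonempty_lists:
  assumes "A \<subseteq> lists D - {[]}" "B \<subseteq> lists D"
  shows "conc A B \<subseteq> lists D - {[]}"
  using assms unfolding conc_def by fastforce

lemma ctrl_lang_conc: "ctrl_lang D K1 \<Longrightarrow> ctrl_lang D K2 \<Longrightarrow> ctrl_lang D (conc K1 K2)"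
  unfolding ctrl_lang_def using conc_subset_nonempty_lists by (blast intro: regular_on.reg_conc)

lemma ctrl_lang_plus: "ctrl_lang D K \<Longrightarrow> ctrl_lang D (conc K (kstar K))"
  unfolding ctrl_lang_def
  using conc_subset_nonempty_lists[of K D "kstar K"] kstar_in_lists[of _ K D]
  by (blast intro: regular_on.reg_conc regular_on.reg_star)

lemma subst_word_append:
  "subst_word \<phi> (u @ v) = conc (subst_word \<phi> u) (subst_word \<phi> v)"
  by (induction u) (auto simp: conc_assoc)

lemma subst_word_cong:
  "w \<in> lists D \<Longrightarrow> (\<And>d. d \<in> D \<Longrightarrow> \<psi> d = \<phi> d) \<Longrightarrow> subst_word \<psi> w = subst_word \<phi> w"
  by (induction w) auto

lemma rsrl_of_cong:
  "K \<subseteq> lists D \<Longrightarrow> (\<And>d. d \<in> D \<Longrightarrow> \<psi> d = \<phi> d) \<Longrightarrow> rsrl_of K \<psi> = rsrl_of K \<phi>"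
  unfolding rsrl_of_def using subst_word_cong[of _ D \<psi> \<phi>] by blast

lemma rsrl_of_conc:
  "rsrl_of (conc A B) \<phi> = lang_set_prod (rsrl_of A \<phi>) (rsrl_of B \<phi>)"
proof (intro equalityI subsetI)
  fix L assume "L \<in> rsrl_of (conc A B) \<phi>"
  then obtain u v where "u \<in> A" "v \<in> B" "L = subst_word \<phi> (u @ v)"
    unfolding rsrl_of_def conc_def by blast
  then show "L \<in> lang_set_prod (rsrl_of A \<phi>) (rsrl_of B \<phi>)"
    unfolding lang_set_prod_def rsrl_of_def subst_word_append by blast
next
  fix L assume "L \<in> lang_set_prod (rsrl_of A \<phi>) (rsrl_of B \<phi>)"
  then obtain u v where "u \<in> A" "v \<in> B" "L = conc (subst_word \<phi> u) (subst_word \<phi> v)"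
    unfolding lang_set_prod_def rsrl_of_def by blast
  moreover have "u @ v \<in> conc A B" using calculation unfolding conc_def by blast
  ultimately show "L \<in> rsrl_of (conc A B) \<phi>"
    unfolding rsrl_of_def subst_word_append [symmetric] by blast
qed

lemma rsrl_of_UN: "rsrl_of (\<Union>i. K i) \<phi> = (\<Union>i. rsrl_of (K i) \<phi>)"
  unfolding rsrl_of_def by blast

lemma rsrl_of_insert: "rsrl_of (insert w K) \<phi> = insert (subst_word \<phi> w) (rsrl_of K \<phi>)"
  unfolding rsrl_of_def by blast

lemma is_rsrl_rsrl_of:
  fixes D :: "nat set"
  assumes "finite D" "D \<noteq> {}" "ctrl_lang D K" "reg_subst_on D \<phi>"
  shows "is_rsrl (rsrl_of K \<phi>)"
  unfolding is_rsrl_def using assms by blast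

lemma lang_set_pow_rsrl_of: "lang_set_pow (rsrl_of K \<phi>) i = rsrl_of (lang_pow K i) \<phi>"
  by (induction i) (simp add: rsrl_of_def, simp only: lang_set_pow.simps lang_pow.simps rsrl_of_conc)

lemma lang_set_star_rsrl_of: "lang_set_star (rsrl_of K \<phi>) = rsrl_of (kstar K) \<phi>"
  unfolding lang_set_star_def lang_set_pow_rsrl_of kstar_eq_UN_lang_pow rsrl_of_UN ..

lemma is_rsrl_insert_Nil:
  fixes D :: "nat set"
  assumes "finite D" "ctrl_lang D K" "reg_subst_on D \<phi>"
  shows "is_rsrl (insert {[]} (rsrl_of K \<phi>))"
proof -
  obtain e :: nat where "e \<notin> D"
    using ex_new_if_finite[OF infinite_UNIV_nat \<open>finite D\<close>] by blast
  define \<psi> where "\<psi> = \<phi>(e := {[]})"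
  have "ctrl_lang (insert e D) (insert [e] K)"
    using assms(2) regular_on_mono[of D K "insert e D"]
    unfolding ctrl_lang_def
    by (auto intro: regular_on.reg_union[of _ "{[e]}", simplified] regular_on.reg_letter)
  moreover have "reg_subst_on (insert e D) \<psi>"
    using assms(3) unfolding reg_subst_on_def \<psi>_def by (auto intro: regular_on.reg_eps)
  moreover have "rsrl_of K \<psi> = rsrl_of K \<phi>"
    using assms(2) \<open>e \<notin> D\<close> unfolding ctrl_lang_def \<psi>_def
    by (intro rsrl_of_cong[of K D]) auto
  then have "insert {[]} (rsrl_of K \<phi>) = rsrl_of (insert [e] K) \<psi>"
    by (simp add: rsrl_of_insert \<psi>_def)
  ultimately show ?thesis
    using is_rsrl_rsrl_of[of "insert e D"] \<open>finite D\<close> by simp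
qed

lemma is_rsrl_lang_set_star:
  assumes "is_rsrl R" shows "is_rsrl (lang_set_star R)"
proof -
  obtain D :: "nat set" and K \<phi> where "finite D" "ctrl_lang D K" "reg_subst_on D \<phi>"
    and R: "R = rsrl_of K \<phi>"
    using assms unfolding is_rsrl_def by blast
  have "lang_set_star R = insert {[]} (rsrl_of (conc K (kstar K)) \<phi>)"
    unfolding R lang_set_star_rsrl_of by (subst kstar_unfold) (simp add: rsrl_of_insert)
  then show ?thesis
    using is_rsrl_insert_Nil \<open>finite D\<close> ctrl_lang_plus[OF \<open>ctrl_lang D K\<close>] \<open>reg_subst_on D \<phi>\<close>
    by simp
qed

lemma lang_set_pow_singleton_letter: "lang_set_pow {{[a]}} i = {{replicate i a}}"
  by (induction i) (auto simp: lang_set_prod_def conc_def replicate_append_same)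

lemma infinite_lang_set_star_singleton_letter: "infinite (lang_set_star {{[a]}})"
proof -
  have "lang_set_star {{[a]}} = range (\<lambda>i. {replicate i a})"
    unfolding lang_set_star_def lang_set_pow_singleton_letter by blast
  moreover have "inj (\<lambda>i. {replicate i a})"
    by (rule injI) (metis length_replicate singleton_inject)
  ultimately show ?thesis
    using finite_imageD infinite_UNIV_nat by metis
qed

lemma is_rsrl_singleton_letter: "is_rsrl {{[a]}}"
proof -
  have "{{[a]}} = rsrl_of {[0::nat]} (\<lambda>_. {[a]})"
    unfolding rsrl_of_def by simp
  moreover have "ctrl_lang {0::nat} {[0]}"
    unfolding ctrl_lang_def by (auto intro: regular_on.reg_letter)
  moreover have "reg_subst_on {0::nat} (\<lambda>_. {[a]})"
    unfolding reg_subst_on_def by (auto intro: regular_on.reg_letter)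
  ultimately show ?thesis
    using is_rsrl_rsrl_of[of "{0}"] by simp
qed

theorem proposition1:
  fixes \<phi> :: "'d::finite \<Rightarrow> 'a::finite list set"
  assumes "reg_subst_on (UNIV :: 'd set) \<phi>"
  shows "(\<forall>K1 K2. ctrl_lang UNIV K1 \<longrightarrow> ctrl_lang UNIV K2 \<longrightarrow>
            (\<exists>K'. ctrl_lang UNIV K' \<and>
                lang_set_prod (rsrl_of K1 \<phi>) (rsrl_of K2 \<phi>) = rsrl_of K' \<phi>) \<and>
            (finite (rsrl_of K1 \<phi>) \<longrightarrow> finite (rsrl_of K2 \<phi>) \<longrightarrow>
                finite (lang_set_prod (rsrl_of K1 \<phi>) (rsrl_of K2 \<phi>))))
       \<and> (\<forall>R :: 'a list set set. is_rsrl R \<longrightarrow> is_rsrl (lang_set_star R))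
       \<and> (\<exists>R :: 'a list set set. is_rsrl R \<and> finite R \<and> infinite (lang_set_star R))"
proof (intro conjI allI impI)
  fix K1 K2 :: "'d list set"
  assume "ctrl_lang UNIV K1" "ctrl_lang UNIV K2"
  then have "ctrl_lang UNIV (conc K1 K2)" by (rule ctrl_lang_conc)
  then show "\<exists>K'. ctrl_lang UNIV K' \<and>
      lang_set_prod (rsrl_of K1 \<phi>) (rsrl_of K2 \<phi>) = rsrl_of K' \<phi>"
    by (auto simp: rsrl_of_conc)
next
  fix K1 K2 :: "'d list set"
  assume "finite (rsrl_of K1 \<phi>)" "finite (rsrl_of K2 \<phi>)"
  then show "finite (lang_set_prod (rsrl_of K1 \<phi>) (rsrl_of K2 \<phi>))"
    by (rule finite_lang_set_prod)
next
  fix R :: "'a list set set"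
  assume "is_rsrl R"
  then show "is_rsrl (lang_set_star R)" by (rule is_rsrl_lang_set_star)
next
  fix a :: 'a
  show "\<exists>R :: 'a list set set. is_rsrl R \<and> finite R \<and> infinite (lang_set_star R)"
    by (intro exI[of _ "{{[a]}}"] conjI is_rsrl_singleton_letter
        infinite_lang_set_star_singleton_letter) simp
qed

end
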